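(* Let $\tilde U=[\tilde u_1,\dots,\tilde u_N]\in\mathbb R^{d\times N}$ be a normalized embedding, i.e. $\tilde K=\tilde U^\top\tilde U$ satisfies $\tilde K_{kk}=1$ for all $k\in[N]$. Let $C>0$ and $\mathcal H_{\tilde U}=\{w\mid w=\tilde U\beta,\ \beta\in\mathbb R^N,\ \|\beta\|_\infty\le C\}$. Then for $p\in(0,1/2]$, $$R(\mathcal H_{\tilde U},\tilde U,p)\le C\sqrt{2p\,\lambda_1(\tilde K)},$$ where $\lambda_1(\tilde K)$ is the largest eigenvalue of $\tilde K$.
   Context: Transductive Rademacher complexity: for a class $\mathcal H$ of vectors $h\in\mathbb R^d$ and $p\in(0,1/2]$, $R(\mathcal H,\tilde U,p)=\frac1N\mathbb E_\gamma\big[\sup_{h\in\mathcal H}\sum_{k=1}^N\gamma_k h^\top\tilde u_k\big]$, where $\gamma_1,\dots,\gamma_N$ are i.i.d. random variables taking values $+1,-1,0$ with probabilities $p,p,1-2p$. In the paper $\tilde U$ is an embedding of node pairs of a graph (columns indexed by pairs), but the statement only uses that the columns have unit norm. *)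

theory Defs
  imports "HOL-Analysis.Analysis"
begin

text \<open>Columns of U :: real^'n^'d are indexed by the finite type 'n (so N = CARD('n)),
  rows by the finite type 'd (so d = CARD('d)).\<close>

definition largest_eigenvalue :: "real^'n^'n \<Rightarrow> real" where
  "largest_eigenvalue A = Max {c. \<exists>v. v \<noteq> 0 \<and> A *v v = c *\<^sub>R v}"

definition gamma_prob :: "real \<Rightarrow> real \<Rightarrow> real" where
  "gamma_prob p g = (if g = 0 then 1 - 2 * p else p)"

text \<open>Transductive Rademacher complexity R(H, U, p): the expectation over the i.i.d.
  gamma in {-1,0,1}^N written out as a finite weighted sum.\<close>
definition trans_rademacher ::
  "(real^'d) set \<Rightarrow> real^'n^'d \<Rightarrow> real \<Rightarrow> real" where
  "trans_rademacher H U p =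
     (1 / real CARD('n)) *
     (\<Sum>\<gamma> \<in> PiE (UNIV :: 'n set) (\<lambda>_. {-1, 0, 1 :: real}).
         (\<Prod>k\<in>UNIV. gamma_prob p (\<gamma> k)) *
         (SUP h\<in>H. \<Sum>k\<in>UNIV. \<gamma> k * (h \<bullet> column k U)))"

definition H_class :: "real^'n^'d \<Rightarrow> real \<Rightarrow> (real^'d) set" where
  "H_class U C = {U *v \<beta> | \<beta>. \<forall>k. \<bar>\<beta> $ k\<bar> \<le> C}"

end

theory Submission
  imports Defs
begin

text \<open>Write \<open>K = U\<^sup>T U\<close>, \<open>\<lambda> = \<lambda>\<^sub>1(K)\<close> and \<open>\<gamma>\<close> also for the vector \<open>(\<gamma>\<^sub>1, ..., \<gamma>\<^sub>N)\<close>.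
  For \<open>h = U \<beta>\<close> in the class, \<open>\<Sum>\<^sub>k \<gamma>\<^sub>k h \<bullet> u\<^sub>k = \<beta> \<bullet> K \<gamma>\<close>, which is at most
  \<open>C |K \<gamma>|\<^sub>1 \<le> C \<surd>N |K \<gamma>|\<close>. Since \<open>K\<close> is positive semidefinite,
  \<open>|K x|\<^sup>2 \<le> \<lambda> (x \<bullet> K x)\<close>: Cauchy-Schwarz for the form of \<open>K\<close> combined with the
  Rayleigh bound \<open>y \<bullet> K y \<le> \<lambda> |y|\<^sup>2\<close>. By Jensen and \<open>E \<gamma>\<^sub>j \<gamma>\<^sub>k = 2p\<close> if \<open>j = k\<close> and
  \<open>0\<close> otherwise, \<open>E |K \<gamma>| \<le> (\<lambda> E (\<gamma> \<bullet> K \<gamma>))\<^sup>1\<^sup>/\<^sup>2 = (2p \<lambda> tr K)\<^sup>1\<^sup>/\<^sup>2\<close>, and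
  \<open>tr K = N\<close> for unit columns. Hence \<open>R \<le> (C \<surd>N / N) \<surd>(2p \<lambda> N) = C \<surd>(2p \<lambda>)\<close>.\<close>

lemma inner_Gram_matrix:
  fixes U :: "real^'n^'d"
  shows "x \<bullet> ((transpose U ** U) *v y) = (U *v x) \<bullet> (U *v y)"
  by (metis dot_lmul_matrix matrix_vector_mul_assoc vector_transpose_matrix)

lemma inner_matrix_symmetric:
  fixes A :: "real^'n^'n"
  assumes "transpose A = A"
  shows "x \<bullet> (A *v y) = (A *v x) \<bullet> y"
  by (metis assms dot_lmul_matrix vector_transpose_matrix)

lemma finite_eigenvalues_symmetric:
  fixes A :: "real^'n^'n"
  assumes sym: "transpose A = A"
  shows "finite {c. \<exists>v. v \<noteq> 0 \<and> A *v v = c *\<^sub>R v}" (is "finite ?E")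
proof -
  define f where "f c = (SOME v. v \<noteq> 0 \<and> A *v v = c *\<^sub>R v)" for c
  have f: "f c \<noteq> 0 \<and> A *v f c = c *\<^sub>R f c" if "c \<in> ?E" for c
    using that unfolding f_def by (metis (mono_tags, lifting) mem_Collect_eq someI_ex)
  have inj: "inj_on f ?E"
  proof (rule inj_onI)
    fix a b assume a: "a \<in> ?E" and b: "b \<in> ?E" and "f a = f b"
    then show "a = b" using f[OF a] f[OF b] by (metis scaleR_cancel_right)
  qed
  have "f a \<bullet> f b = 0" if "a \<in> ?E" "b \<in> ?E" "a \<noteq> b" for a b
  proof -
    have "b * (f a \<bullet> f b) = a * (f a \<bullet> f b)"
      using inner_matrix_symmetric[OF sym, of "f a" "f b"] f[OF that(1)] f[OF that(2)] by simp
    then show ?thesis using that(3) by simp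
  qed
  then have "pairwise orthogonal (f ` ?E)"
    using inj by (auto simp: pairwise_def orthogonal_def inj_on_def)
  moreover have "0 \<notin> f ` ?E" using f by (metis (no_types, lifting) imageE)
  ultimately have "independent (f ` ?E)" by (rule pairwise_orthogonal_independent)
  then have "finite (f ` ?E)" using independent_bound by blast
  then show ?thesis using inj finite_imageD by blast
qed

lemma linear_coeff_zero_if_quadratic_nonpos:
  fixes a b :: real
  assumes "a \<ge> 0" and nonpos: "\<And>t. t > 0 \<Longrightarrow> 2 * t * a + t\<^sup>2 * b \<le> 0"
  shows "a = 0"
proof (rule ccontr)
  assume "a \<noteq> 0"
  with assms(1) have a: "a > 0" by simp
  define t where "t = a / (\<bar>b\<bar> + 1)"
  have t: "t > 0" using a by (simp add: t_def)
  have "t * (2 * a + t * b) \<le> 0"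
    using nonpos[OF t] by (simp add: power2_eq_square algebra_simps)
  then have "2 * a + t * b \<le> 0" using t by (simp add: mult_le_0_iff)
  moreover have "t * \<bar>b\<bar> < a" using a by (simp add: t_def field_simps)
  moreover have "- (t * b) \<le> t * \<bar>b\<bar>" using t by (simp add: abs_if)
  ultimately show False using a by linarith
qed

text \<open>A maximiser of the Rayleigh quotient on the unit sphere is an eigenvector: the
  first-order condition at \<open>x\<^sub>0\<close> in the direction \<open>z = A x\<^sub>0 - \<mu> x\<^sub>0\<close> forces \<open>z = 0\<close>.\<close>
lemma symmetric_matrix_Rayleigh_eigenvector:
  fixes A :: "real^'n^'n"
  assumes sym: "transpose A = A"
  obtains \<mu> x0 where "x0 \<noteq> 0" "A *v x0 = \<mu> *\<^sub>R x0" "\<And>x. x \<bullet> (A *v x) \<le> \<mu> * (x \<bullet> x)"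
proof -
  define g where "g x = x \<bullet> (A *v x)" for x :: "real^'n"
  have "continuous_on (sphere 0 1) g" unfolding g_def by (intro continuous_intros)
  moreover have "sphere (0::real^'n) 1 \<noteq> {}" by simp
  ultimately obtain x0 where x0: "x0 \<in> sphere 0 1" and max: "\<And>y. y \<in> sphere 0 1 \<Longrightarrow> g y \<le> g x0"
    using continuous_attains_sup[OF compact_sphere] by metis
  define \<mu> where "\<mu> = g x0"
  have bound: "g x \<le> \<mu> * (x \<bullet> x)" for x
  proof (cases "x = 0")
    case True then show ?thesis by (simp add: g_def)
  next
    case False
    define y where "y = (1 / norm x) *\<^sub>R x"
    have "g y \<le> \<mu>" using False max by (simp add: \<mu>_def y_def)
    moreover have "g x = (x \<bullet> x) * g y"
      using False by (simp add: g_def y_def matrix_vector_mult_scaleR power2_eq_square flip: power2_norm_eq_inner)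
    ultimately show ?thesis by (metis inner_ge_zero mult.commute mult_left_mono)
  qed
  have x0_unit: "x0 \<bullet> x0 = 1" using x0 by (simp add: dot_square_norm)
  define z where "z = A *v x0 - \<mu> *\<^sub>R x0"
  have "z \<bullet> z = 0"
  proof (rule linear_coeff_zero_if_quadratic_nonpos)
    fix t :: real assume "t > 0"
    have "x0 \<bullet> (A *v z) = z \<bullet> (A *v x0)"
      using inner_matrix_symmetric[OF sym, of x0 z] inner_commute by metis
    then have expand_g: "g (x0 + t *\<^sub>R z) = \<mu> + 2 * t * (z \<bullet> (A *v x0)) + t\<^sup>2 * g z"
      unfolding g_def \<mu>_def
      by (simp add: matrix_vector_right_distrib matrix_vector_mult_scaleR inner_add_left
          inner_add_right power2_eq_square inner_commute[of x0 "A *v x0"] distrib_left)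
    have expand_norm: "(x0 + t *\<^sub>R z) \<bullet> (x0 + t *\<^sub>R z) = 1 + 2 * t * (z \<bullet> x0) + t\<^sup>2 * (z \<bullet> z)"
      using x0_unit by (simp add: inner_add_left inner_add_right power2_eq_square inner_commute)
    have "z \<bullet> (A *v x0) = z \<bullet> z + \<mu> * (z \<bullet> x0)"
      by (simp add: z_def inner_diff_right)
    then have "\<mu> + 2 * t * (z \<bullet> z + \<mu> * (z \<bullet> x0)) + t\<^sup>2 * g z
        \<le> \<mu> * (1 + 2 * t * (z \<bullet> x0) + t\<^sup>2 * (z \<bullet> z))"
      using bound[of "x0 + t *\<^sub>R z"] unfolding expand_g expand_norm by simp
    then show "2 * t * (z \<bullet> z) + t\<^sup>2 * (g z - \<mu> * (z \<bullet> z)) \<le> 0"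
      by (simp add: algebra_simps)
  qed simp
  then have "A *v x0 = \<mu> *\<^sub>R x0" by (simp add: z_def)
  moreover have "x0 \<noteq> 0" using x0 by auto
  ultimately show ?thesis using that bound unfolding g_def by blast
qed

lemma quadratic_form_le_largest_eigenvalue:
  fixes A :: "real^'n^'n"
  assumes sym: "transpose A = A"
  shows "x \<bullet> (A *v x) \<le> largest_eigenvalue A * (x \<bullet> x)"
proof -
  obtain \<mu> v where v: "v \<noteq> 0" "A *v v = \<mu> *\<^sub>R v" and bound: "\<And>x. x \<bullet> (A *v x) \<le> \<mu> * (x \<bullet> x)"
    using symmetric_matrix_Rayleigh_eigenvector[OF sym] by blast
  have "\<mu> \<le> largest_eigenvalue A"
    unfolding largest_eigenvalue_def using v
    by (intro Max_ge finite_eigenvalues_symmetric[OF sym]) auto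
  then show ?thesis using bound[of x] by (meson inner_ge_zero mult_right_mono order_trans)
qed

lemma symmetric_Gram_matrix:
  fixes U :: "real^'n^'d"
  shows "transpose (transpose U ** U) = transpose U ** U"
  by (simp add: matrix_transpose_mul transpose_transpose)

lemma largest_eigenvalue_Gram_nonneg:
  fixes U :: "real^'n^'d"
  shows "0 \<le> largest_eigenvalue (transpose U ** U)"
proof -
  fix i :: 'n
  define x :: "real^'n" where "x = axis i 1"
  have "0 \<le> (U *v x) \<bullet> (U *v x)" by simp
  also have "\<dots> \<le> largest_eigenvalue (transpose U ** U) * (x \<bullet> x)"
    using quadratic_form_le_largest_eigenvalue[OF symmetric_Gram_matrix] by (simp add: inner_Gram_matrix)
  finally show ?thesis by (simp add: x_def)
qed

text \<open>Positive semidefiniteness enters through Cauchy-Schwarz for the form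
  \<open>(x, y) \<mapsto> U x \<bullet> U y\<close>, applied to \<open>K x\<close> and \<open>x\<close>.\<close>
lemma norm_Gram_mult_sq_le:
  fixes U :: "real^'n^'d"
  defines "K \<equiv> transpose U ** U"
  shows "(norm (K *v x))\<^sup>2 \<le> largest_eigenvalue K * (x \<bullet> (K *v x))"
proof -
  define L where "L = largest_eigenvalue K"
  define y where "y = K *v x"
  have L: "0 \<le> L" unfolding L_def K_def by (rule largest_eigenvalue_Gram_nonneg)
  have form_x: "0 \<le> x \<bullet> (K *v x)" by (simp add: K_def inner_Gram_matrix)
  have "(y \<bullet> y)\<^sup>2 = ((U *v y) \<bullet> (U *v x))\<^sup>2"
    by (simp add: y_def K_def inner_Gram_matrix inner_commute)
  also have "\<dots> \<le> ((U *v y) \<bullet> (U *v y)) * ((U *v x) \<bullet> (U *v x))"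
    by (rule Cauchy_Schwarz_ineq)
  also have "\<dots> = (y \<bullet> (K *v y)) * (x \<bullet> (K *v x))"
    by (simp add: K_def inner_Gram_matrix)
  also have "\<dots> \<le> (L * (y \<bullet> y)) * (x \<bullet> (K *v x))"
    using quadratic_form_le_largest_eigenvalue[OF symmetric_Gram_matrix[of U], of y] form_x
    by (intro mult_right_mono) (simp_all add: K_def L_def)
  finally have "(y \<bullet> y) * (y \<bullet> y) \<le> (y \<bullet> y) * (L * (x \<bullet> (K *v x)))"
    by (simp add: power2_eq_square mult_ac)
  then have "y \<bullet> y \<le> L * (x \<bullet> (K *v x))"
    using L form_x by (cases "y \<bullet> y = 0") (simp_all add: order_less_le)
  then show ?thesis by (simp add: y_def L_def power2_norm_eq_inner)
qed

lemma sum_abs_le_sqrt_card_norm: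
  fixes v :: "real^'n"
  shows "(\<Sum>j\<in>UNIV. \<bar>v $ j\<bar>) \<le> sqrt (real CARD('n)) * norm v"
  using L2_set_mult_ineq[of "\<lambda>j. v $ j" "\<lambda>_. 1" UNIV]
  by (simp add: norm_vec_def L2_set_constant L2_set_def mult.commute)

lemma sum_mult_inner_columns:
  fixes U :: "real^'n^'d"
  shows "(\<Sum>k\<in>UNIV. \<gamma> k * (h \<bullet> column k U)) = (\<chi> k. \<gamma> k) \<bullet> (transpose U *v h)"
  by (simp add: inner_vec_def matrix_vector_mult_def column_def transpose_def mult.commute)

lemma SUP_H_class_le:
  fixes U :: "real^'n^'d"
  assumes "C \<ge> 0"
  shows "(SUP h\<in>H_class U C. \<Sum>k\<in>UNIV. \<gamma> k * (h \<bullet> column k U))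
     \<le> C * sqrt (real CARD('n)) * norm ((transpose U ** U) *v (\<chi> k. \<gamma> k))"
proof (rule cSUP_least)
  show "H_class U C \<noteq> {}"
    using assms by (auto simp: H_class_def intro!: exI[of _ 0])
next
  fix h assume "h \<in> H_class U C"
  then obtain \<beta> where h: "h = U *v \<beta>" and \<beta>: "\<And>j. \<bar>\<beta> $ j\<bar> \<le> C"
    unfolding H_class_def by blast
  define v where "v = (transpose U ** U) *v (\<chi> k. \<gamma> k)"
  have "(\<Sum>k\<in>UNIV. \<gamma> k * (h \<bullet> column k U)) = (\<chi> k. \<gamma> k) \<bullet> ((transpose U ** U) *v \<beta>)"
    by (simp add: sum_mult_inner_columns h matrix_vector_mul_assoc)
  also have "\<dots> = \<beta> \<bullet> v"
    unfolding v_def inner_Gram_matrix by (rule inner_commute)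
  also have "\<dots> \<le> (\<Sum>j\<in>UNIV. C * \<bar>v $ j\<bar>)"
    unfolding inner_vec_def
  proof (rule sum_mono)
    fix j
    have "\<beta> $ j * v $ j \<le> \<bar>\<beta> $ j\<bar> * \<bar>v $ j\<bar>" by (simp add: abs_mult flip: abs_mult)
    also have "\<dots> \<le> C * \<bar>v $ j\<bar>" by (intro mult_right_mono \<beta>) simp
    finally show "\<beta> $ j \<bullet> v $ j \<le> C * \<bar>v $ j\<bar>" by simp
  qed
  also have "\<dots> \<le> C * (sqrt (real CARD('n)) * norm v)"
    unfolding sum_distrib_left[symmetric] using assms
    by (intro mult_left_mono sum_abs_le_sqrt_card_norm)
  finally show "(\<Sum>k\<in>UNIV. \<gamma> k * (h \<bullet> column k U)) \<le> C * sqrt (real CARD('n)) * norm v"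
    by (simp add: mult.assoc)
qed

definition ternary_vectors :: "('n::finite \<Rightarrow> real) set" where
  "ternary_vectors = PiE UNIV (\<lambda>_. {-1, 0, 1})"

definition gamma_weight :: "real \<Rightarrow> ('n::finite \<Rightarrow> real) \<Rightarrow> real" where
  "gamma_weight p \<gamma> = (\<Prod>k\<in>UNIV. gamma_prob p (\<gamma> k))"

lemma trans_rademacher_eq:
  fixes U :: "real^'n^'d"
  shows "trans_rademacher H U p =
    (\<Sum>\<gamma>\<in>ternary_vectors. gamma_weight p \<gamma> * (SUP h\<in>H. \<Sum>k\<in>UNIV. \<gamma> k * (h \<bullet> column k U)))
      / real CARD('n)"
  by (simp add: trans_rademacher_def ternary_vectors_def gamma_weight_def)

lemma finite_ternary_vectors: "finite ternary_vectors"
  by (simp add: ternary_vectors_def finite_PiE)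

lemma gamma_weight_nonneg: "0 \<le> p \<Longrightarrow> p \<le> 1/2 \<Longrightarrow> 0 \<le> gamma_weight p \<gamma>"
  unfolding gamma_weight_def by (intro prod_nonneg) (simp add: gamma_prob_def)

lemma sum_ternary_vectors_prod:
  fixes f :: "'n::finite \<Rightarrow> real \<Rightarrow> real"
  shows "(\<Sum>\<gamma>\<in>ternary_vectors. \<Prod>k\<in>UNIV. f k (\<gamma> k)) = (\<Prod>k\<in>UNIV. \<Sum>g\<in>{-1, 0, 1}. f k g)"
  unfolding ternary_vectors_def by (rule prod_sum_PiE[symmetric]) auto

lemma sum_gamma_weight: "(\<Sum>\<gamma>\<in>ternary_vectors. gamma_weight p (\<gamma> :: 'n::finite \<Rightarrow> real)) = 1"
  using sum_ternary_vectors_prod[of "\<lambda>_. gamma_prob p"] by (simp add: gamma_weight_def gamma_prob_def)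

lemma sum_gamma_weight_mult_mult:
  fixes j k :: "'n::finite"
  shows "(\<Sum>\<gamma>\<in>ternary_vectors. gamma_weight p \<gamma> * (\<gamma> j * \<gamma> k)) = (if j = k then 2 * p else 0)"
proof -
  \<comment> \<open>fold \<open>\<gamma>\<^sub>j \<gamma>\<^sub>k\<close> into the product, so that the sum factorises over coordinates\<close>
  define f where "f i g = gamma_prob p g * (if i = j then g else 1) * (if i = k then g else 1)"
    for i and g :: real
  have "gamma_weight p \<gamma> * (\<gamma> j * \<gamma> k) = (\<Prod>i\<in>UNIV. f i (\<gamma> i))" for \<gamma>
    unfolding f_def gamma_weight_def prod.distrib by simp
  then have "(\<Sum>\<gamma>\<in>ternary_vectors. gamma_weight p \<gamma> * (\<gamma> j * \<gamma> k))
      = (\<Prod>i\<in>UNIV. \<Sum>g\<in>{-1, 0, 1}. f i g)"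
    by (simp add: sum_ternary_vectors_prod)
  also have "\<dots> = (\<Prod>i\<in>UNIV. if i = j \<and> i = k then 2 * p else if i = j \<or> i = k then 0 else 1)"
    by (intro prod.cong) (auto simp: f_def gamma_prob_def)
  also have "\<dots> = (if j = k then 2 * p else 0)"
    by (cases "j = k") (auto intro!: prod_zero cong: if_cong)
  finally show ?thesis .
qed

lemma sum_gamma_weight_quadratic_form:
  fixes A :: "real^'n^'n"
  shows "(\<Sum>\<gamma>\<in>ternary_vectors. gamma_weight p \<gamma> * ((\<chi> k. \<gamma> k) \<bullet> (A *v (\<chi> k. \<gamma> k))))
       = 2 * p * trace A"
proof -
  have "(\<Sum>\<gamma>\<in>ternary_vectors. gamma_weight p \<gamma> * ((\<chi> k. \<gamma> k) \<bullet> (A *v (\<chi> k. \<gamma> k))))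
      = (\<Sum>\<gamma>\<in>ternary_vectors. \<Sum>j\<in>UNIV. \<Sum>k\<in>UNIV. A $ j $ k * (gamma_weight p \<gamma> * (\<gamma> j * \<gamma> k)))"
    by (simp add: inner_vec_def matrix_vector_mult_def sum_distrib_left mult_ac)
  also have "\<dots> = (\<Sum>j\<in>UNIV. \<Sum>k\<in>UNIV. A $ j $ k *
      (\<Sum>\<gamma>\<in>ternary_vectors. gamma_weight p \<gamma> * (\<gamma> j * \<gamma> k)))"
    by (simp add: sum_distrib_left sum.swap[of _ ternary_vectors])
  also have "\<dots> = (\<Sum>j\<in>UNIV. A $ j $ j * (2 * p))"
    by (simp add: sum_gamma_weight_mult_mult if_distrib cong: if_cong)
  finally show ?thesis by (simp add: trace_def sum_distrib_left mult_ac)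
qed

lemma weighted_mean_le_sqrt_weighted_mean_sq:
  fixes w a :: "'a \<Rightarrow> real"
  assumes "finite A" and "\<And>x. x \<in> A \<Longrightarrow> 0 \<le> w x" and "sum w A = 1"
  shows "(\<Sum>x\<in>A. w x * a x) \<le> sqrt (\<Sum>x\<in>A. w x * (a x)\<^sup>2)"
proof -
  define m where "m = (\<Sum>x\<in>A. w x * a x)"
  have "0 \<le> (\<Sum>x\<in>A. w x * (a x - m)\<^sup>2)"
    using assms(2) by (intro sum_nonneg) auto
  also have "\<dots> = (\<Sum>x\<in>A. w x * (a x)\<^sup>2) - 2 * m * (\<Sum>x\<in>A. w x * a x) + m\<^sup>2 * sum w A"
    by (simp add: power2_eq_square algebra_simps sum.distrib sum_subtractf
        sum_distrib_left sum_distrib_right)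
  finally have "m\<^sup>2 \<le> (\<Sum>x\<in>A. w x * (a x)\<^sup>2)"
    using assms(3) by (simp add: m_def power2_eq_square)
  then show ?thesis by (simp add: m_def real_le_rsqrt)
qed

lemma sum_gamma_weight_norm_Gram_mult_le:
  fixes U :: "real^'n^'d"
  defines "K \<equiv> transpose U ** U"
  assumes "0 \<le> p" and "p \<le> 1/2"
  shows "(\<Sum>\<gamma>\<in>ternary_vectors. gamma_weight p \<gamma> * norm (K *v (\<chi> k. \<gamma> k)))
    \<le> sqrt (largest_eigenvalue K * (2 * p * trace K))"
proof -
  have w: "\<And>\<gamma>. 0 \<le> gamma_weight p \<gamma>"
    using assms(2,3) by (rule gamma_weight_nonneg)
  have "(\<Sum>\<gamma>\<in>ternary_vectors. gamma_weight p \<gamma> * norm (K *v (\<chi> k. \<gamma> k)))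
      \<le> sqrt (\<Sum>\<gamma>\<in>ternary_vectors. gamma_weight p \<gamma> * (norm (K *v (\<chi> k. \<gamma> k)))\<^sup>2)"
    using finite_ternary_vectors w sum_gamma_weight
    by (rule weighted_mean_le_sqrt_weighted_mean_sq)
  also have "\<dots> \<le> sqrt (\<Sum>\<gamma>\<in>ternary_vectors.
      gamma_weight p \<gamma> * (largest_eigenvalue K * ((\<chi> k. \<gamma> k) \<bullet> (K *v (\<chi> k. \<gamma> k)))))"
    unfolding K_def by (intro real_sqrt_le_mono sum_mono mult_left_mono w norm_Gram_mult_sq_le)
  also have "\<dots> = sqrt (largest_eigenvalue K * (2 * p * trace K))"
    by (simp add: sum_gamma_weight_quadratic_form mult.left_commute flip: sum_distrib_left)
  finally show ?thesis .
qed

theorem theorem2: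
  fixes U :: "real^'n^'d" and C p :: real
  assumes norm1: "\<forall>k. (transpose U ** U) $ k $ k = 1"
    and C_pos: "C > 0"
    and p_pos: "0 < p" and p_le: "p \<le> 1/2"
  shows "trans_rademacher (H_class U C) U p
           \<le> C * sqrt (2 * p * largest_eigenvalue (transpose U ** U))"
proof -
  define K where "K = transpose U ** U"
  define N where "N = real CARD('n)"
  have N: "N > 0" by (simp add: N_def)
  have trace: "trace K = N" using norm1 by (simp add: trace_def K_def N_def)
  have "trans_rademacher (H_class U C) U p
      \<le> (\<Sum>\<gamma>\<in>ternary_vectors. gamma_weight p \<gamma> * (C * sqrt N * norm (K *v (\<chi> k. \<gamma> k)))) / N"
    unfolding trans_rademacher_eq N_def K_def using C_pos p_pos p_le
    by (intro divide_right_mono sum_mono mult_left_mono SUP_H_class_le gamma_weight_nonneg) simp_all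
  also have "\<dots> = C * sqrt N / N * (\<Sum>\<gamma>\<in>ternary_vectors. gamma_weight p \<gamma> * norm (K *v (\<chi> k. \<gamma> k)))"
    by (simp add: sum_distrib_left sum_divide_distrib mult_ac)
  also have "\<dots> \<le> C * sqrt N / N * sqrt (largest_eigenvalue K * (2 * p * N))"
    using sum_gamma_weight_norm_Gram_mult_le[of p U, folded K_def, unfolded trace] C_pos N p_pos p_le
    by (intro mult_left_mono) simp_all
  also have "\<dots> = C * sqrt (2 * p * largest_eigenvalue K)"
    using N by (simp add: real_sqrt_mult field_simps)
  finally show ?thesis by (simp add: K_def)
qed

end
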